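(* Let $X$ be a finite connected poset. Then $\mathcal{P}(X)\subseteq\mathcal{AM}(X)$.
   Context: For $x<y$ in $X$, $e_{xy}$ denotes the incidence-algebra basis element and $B=\{e_{xy}:x<y\}$. $\mathcal{C}(X)$ is the set of maximal chains. For a bijection $\theta:B\to B$ and $C:u_1<\dots<u_m$ in $\mathcal{C}(X)$, $\theta$ is increasing on $C$ if there is $D:v_1<\dots<v_m$ in $\mathcal{C}(X)$ with $\theta(e_{u_iu_j})=e_{v_iv_j}$ for all $i<j$, decreasing if $\theta(e_{u_iu_j})=e_{v_{m-j+1}v_{m-i+1}}$ for all $i<j$. $\mathcal{M}(X)$: bijections $B\to B$ increasing or decreasing on every maximal chain. A walk is a sequence $u_0,\dots,u_m$ where for each $i$ one of $u_i,u_{i+1}$ covers the other; closed if $u_0=u_m$. For a closed walk $\Gamma:u_0,\dots,u_m=u_0$ and $z\in X$: $s^+_{\theta,\Gamma}(z)=|\{i: u_i<u_{i+1},\ \exists w>z,\ \theta(e_{zw})=e_{u_iu_{i+1}}\}|$, $s^-_{\theta,\Gamma}(z)=|\{i: u_i>u_{i+1},\ \exists w>z,\ \theta(e_{zw})=e_{u_{i+1}u_i}\}|$, $t^+_{\theta,\Gamma}(z)=|\{i: u_i<u_{i+1},\ \exists w<z,\ \theta(e_{wz})=e_{u_iu_{i+1}}\}|$, $t^-_{\theta,\Gamma}(z)=|\{i: u_i>u_{i+1},\ \exists w<z,\ \theta(e_{wz})=e_{u_{i+1}u_i}\}|$, $0\le i\le m-1$. $\theta$ is admissible if $s^+-s^-=t^+-t^-$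 at every $z$ for every closed walk; $\mathcal{AM}(X)$ is the set of admissible elements of $\mathcal{M}(X)$. $\theta:B\to B$ is proper if there is an automorphism $\lambda$ of $X$ with $\theta(e_{xy})=e_{\lambda(x)\lambda(y)}$ for all $x<y$, or an anti-automorphism $\lambda$ with $\theta(e_{xy})=e_{\lambda(y)\lambda(x)}$ for all $x<y$; $\mathcal{P}(X)$ is the set of proper bijections. *)

theory Defs
  imports Main
begin

text \<open>A finite poset is represented by a finite carrier set X of a type of class order,
  with the induced order. The basis element e_xy (x<y) is represented by the pair (x,y).\<close>

definition basisB :: "'a::order set \<Rightarrow> ('a \<times> 'a) set" where
  "basisB X = {(x, y). x \<in> X \<and> y \<in> X \<and> x < y}"

definition is_chain :: "'a::order set \<Rightarrow> 'a set \<Rightarrow> bool" where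
  "is_chain X C \<longleftrightarrow> C \<subseteq> X \<and> (\<forall>x\<in>C. \<forall>y\<in>C. x \<le> y \<or> y \<le> x)"

definition is_max_chain :: "'a::order set \<Rightarrow> 'a set \<Rightarrow> bool" where
  "is_max_chain X C \<longleftrightarrow> is_chain X C \<and> (\<forall>C'. is_chain X C' \<and> C \<subseteq> C' \<longrightarrow> C' = C)"

definition max_chain_list :: "'a::order set \<Rightarrow> 'a list \<Rightarrow> bool" where
  "max_chain_list X us \<longleftrightarrow> sorted_wrt (<) us \<and> is_max_chain X (set us)"

definition increasing_on :: "'a::order set \<Rightarrow> ('a \<times> 'a \<Rightarrow> 'a \<times> 'a) \<Rightarrow> 'a list \<Rightarrow> bool" where
  "increasing_on X \<theta> us \<longleftrightarrow> (\<exists>vs. max_chain_list X vs \<and> length vs = length us \<and>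
     (\<forall>i j. i < j \<and> j < length us \<longrightarrow> \<theta> (us ! i, us ! j) = (vs ! i, vs ! j)))"

text \<open>0-indexed version of theta(e_{u_i u_j}) = e_{v_{m-j+1} v_{m-i+1}}.\<close>
definition decreasing_on :: "'a::order set \<Rightarrow> ('a \<times> 'a \<Rightarrow> 'a \<times> 'a) \<Rightarrow> 'a list \<Rightarrow> bool" where
  "decreasing_on X \<theta> us \<longleftrightarrow> (\<exists>vs. max_chain_list X vs \<and> length vs = length us \<and>
     (\<forall>i j. i < j \<and> j < length us \<longrightarrow>
        \<theta> (us ! i, us ! j) = (vs ! (length us - 1 - j), vs ! (length us - 1 - i))))"

definition M_set :: "'a::order set \<Rightarrow> ('a \<times> 'a \<Rightarrow> 'a \<times> 'a) set" where
  "M_set X = {\<theta>. bij_betw \<theta> (basisB X) (basisB X) \<and>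
     (\<forall>us. max_chain_list X us \<longrightarrow> increasing_on X \<theta> us \<or> decreasing_on X \<theta> us)}"

definition covers :: "'a::order set \<Rightarrow> 'a \<Rightarrow> 'a \<Rightarrow> bool" where
  "covers X y x \<longleftrightarrow> x \<in> X \<and> y \<in> X \<and> x < y \<and> \<not> (\<exists>z\<in>X. x < z \<and> z < y)"

definition is_walk :: "'a::order set \<Rightarrow> 'a list \<Rightarrow> bool" where
  "is_walk X us \<longleftrightarrow> us \<noteq> [] \<and> set us \<subseteq> X \<and>
     (\<forall>i. Suc i < length us \<longrightarrow> covers X (us ! i) (us ! Suc i) \<or> covers X (us ! Suc i) (us ! i))"

definition closed_walk :: "'a::order set \<Rightarrow> 'a list \<Rightarrow> bool" where
  "closed_walk X us \<longleftrightarrow> is_walk X us \<and> hd us = last us"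

definition s_plus :: "'a::order set \<Rightarrow> ('a \<times> 'a \<Rightarrow> 'a \<times> 'a) \<Rightarrow> 'a list \<Rightarrow> 'a \<Rightarrow> nat" where
  "s_plus X \<theta> us z = card {i. Suc i < length us \<and> us ! i < us ! Suc i \<and>
     (\<exists>w\<in>X. z < w \<and> \<theta> (z, w) = (us ! i, us ! Suc i))}"

definition s_minus :: "'a::order set \<Rightarrow> ('a \<times> 'a \<Rightarrow> 'a \<times> 'a) \<Rightarrow> 'a list \<Rightarrow> 'a \<Rightarrow> nat" where
  "s_minus X \<theta> us z = card {i. Suc i < length us \<and> us ! i > us ! Suc i \<and>
     (\<exists>w\<in>X. z < w \<and> \<theta> (z, w) = (us ! Suc i, us ! i))}"

definition t_plus :: "'a::order set \<Rightarrow> ('a \<times> 'a \<Rightarrow> 'a \<times> 'a) \<Rightarrow> 'a list \<Rightarrow> 'a \<Rightarrow> nat" where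
  "t_plus X \<theta> us z = card {i. Suc i < length us \<and> us ! i < us ! Suc i \<and>
     (\<exists>w\<in>X. w < z \<and> \<theta> (w, z) = (us ! i, us ! Suc i))}"

definition t_minus :: "'a::order set \<Rightarrow> ('a \<times> 'a \<Rightarrow> 'a \<times> 'a) \<Rightarrow> 'a list \<Rightarrow> 'a \<Rightarrow> nat" where
  "t_minus X \<theta> us z = card {i. Suc i < length us \<and> us ! i > us ! Suc i \<and>
     (\<exists>w\<in>X. w < z \<and> \<theta> (w, z) = (us ! Suc i, us ! i))}"

definition admissible :: "'a::order set \<Rightarrow> ('a \<times> 'a \<Rightarrow> 'a \<times> 'a) \<Rightarrow> bool" where
  "admissible X \<theta> \<longleftrightarrow> (\<forall>us. closed_walk X us \<longrightarrow> (\<forall>z\<in>X.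
     int (s_plus X \<theta> us z) - int (s_minus X \<theta> us z) = int (t_plus X \<theta> us z) - int (t_minus X \<theta> us z)))"

definition AM_set :: "'a::order set \<Rightarrow> ('a \<times> 'a \<Rightarrow> 'a \<times> 'a) set" where
  "AM_set X = {\<theta> \<in> M_set X. admissible X \<theta>}"

definition poset_automorphism :: "'a::order set \<Rightarrow> ('a \<Rightarrow> 'a) \<Rightarrow> bool" where
  "poset_automorphism X f \<longleftrightarrow> bij_betw f X X \<and> (\<forall>x\<in>X. \<forall>y\<in>X. x \<le> y \<longleftrightarrow> f x \<le> f y)"

definition poset_anti_automorphism :: "'a::order set \<Rightarrow> ('a \<Rightarrow> 'a) \<Rightarrow> bool" where
  "poset_anti_automorphism X f \<longleftrightarrow> bij_betw f X X \<and> (\<forall>x\<in>X. \<forall>y\<in>X. x \<le> y \<longleftrightarrow> f y \<le> f x)"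

definition P_set :: "'a::order set \<Rightarrow> ('a \<times> 'a \<Rightarrow> 'a \<times> 'a) set" where
  "P_set X = {\<theta>. bij_betw \<theta> (basisB X) (basisB X) \<and>
     ((\<exists>f. poset_automorphism X f \<and> (\<forall>(x, y)\<in>basisB X. \<theta> (x, y) = (f x, f y))) \<or>
      (\<exists>f. poset_anti_automorphism X f \<and> (\<forall>(x, y)\<in>basisB X. \<theta> (x, y) = (f y, f x))))}"

definition poset_connected :: "'a::order set \<Rightarrow> bool" where
  "poset_connected X \<longleftrightarrow> (\<forall>x\<in>X. \<forall>y\<in>X.
     (x, y) \<in> ({(a, b). a \<in> X \<and> b \<in> X \<and> (a \<le> b \<or> b \<le> a)})\<^sup>*)"

end

theory Submission
  imports Defs
begin

text \<open>Let \<theta> be induced by an automorphism \<lambda>. Then \<theta> sends the basis elements e_zw with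
  z < w exactly onto those with lower end \<lambda>(z), and those with w < z exactly onto those with
  upper end \<lambda>(z). Hence s+ - s- at z counts the upward steps of a closed walk \<Gamma> that leave
  \<lambda>(z) minus the downward steps that enter it, while t+ - t- counts the upward steps entering
  \<lambda>(z) minus the downward steps leaving it. Their equality just says that \<Gamma> leaves \<lambda>(z) as
  often as it enters it. For an anti-automorphism the two roles are exchanged.
  Membership in M holds because \<lambda> preserves comparability, hence maps maximal chains onto
  maximal chains, in the same (automorphism) or the reversed (anti-automorphism) order.\<close>

lemma is_chain_image:
  assumes "is_chain X C" "f ` X \<subseteq> Y"
    and "\<forall>x\<in>X. \<forall>y\<in>X. x \<le> y \<or> y \<le> x \<longrightarrow> f x \<le> f y \<or> f y \<le> f x"
  shows "is_chain Y (f ` C)"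
  using assms unfolding is_chain_def by blast

lemma is_max_chain_image:
  assumes "is_max_chain X C" "bij_betw f X Y"
    and comp: "\<forall>x\<in>X. \<forall>y\<in>X. (x \<le> y \<or> y \<le> x) \<longleftrightarrow> (f x \<le> f y \<or> f y \<le> f x)"
  shows "is_max_chain Y (f ` C)"
  unfolding is_max_chain_def
proof (intro conjI allI impI)
  have C: "is_chain X C" "C \<subseteq> X"
    using assms(1) unfolding is_max_chain_def is_chain_def by auto
  then show "is_chain Y (f ` C)"
    using comp bij_betw_imp_surj_on[OF assms(2)] by (intro is_chain_image[of X]) auto
  define g where "g = inv_into X f"
  have g: "bij_betw g Y X" "\<And>y. y \<in> Y \<Longrightarrow> f (g y) = y" "\<And>x. x \<in> X \<Longrightarrow> g (f x) = x"
    using assms(2) bij_betw_inv_into bij_betw_inv_into_right bij_betw_inv_into_left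
    unfolding g_def by fastforce+
  have g_comp: "\<forall>x\<in>Y. \<forall>y\<in>Y. x \<le> y \<or> y \<le> x \<longrightarrow> g x \<le> g y \<or> g y \<le> g x"
    using comp g bij_betwE by metis
  fix C' assume C': "is_chain Y C' \<and> f ` C \<subseteq> C'"
  then have "C' \<subseteq> Y" unfolding is_chain_def by blast
  have "is_chain X (g ` C')"
    using C' g_comp bij_betw_imp_surj_on[OF g(1)] by (intro is_chain_image[of Y]) auto
  moreover have "C \<subseteq> g ` C'"
  proof
    fix c assume "c \<in> C"
    then show "c \<in> g ` C'"
      using C' C(2) g(3) by (intro rev_image_eqI[of "f c"]) auto
  qed
  ultimately have "g ` C' = C"
    using assms(1) unfolding is_max_chain_def by blast
  then have "f ` C = f ` g ` C'"
    by simp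
  also have "\<dots> = C'"
    using \<open>C' \<subseteq> Y\<close> g(2) by (force simp: image_image intro: rev_image_eqI)
  finally show "C' = f ` C" ..
qed

lemma poset_automorphism_less_iff:
  assumes "poset_automorphism X f" "x \<in> X" "y \<in> X"
  shows "f x < f y \<longleftrightarrow> x < y"
  using assms unfolding poset_automorphism_def by (metis order.strict_iff_not)

lemma poset_anti_automorphism_less_iff:
  assumes "poset_anti_automorphism X f" "x \<in> X" "y \<in> X"
  shows "f y < f x \<longleftrightarrow> x < y"
  using assms unfolding poset_anti_automorphism_def by (metis order.strict_iff_not)

lemma max_chain_list_basisB:
  assumes "max_chain_list X us" "i < j" "j < length us"
  shows "(us ! i, us ! j) \<in> basisB X"
  using assms sorted_wrt_nth_less[of "(<)" us i j]
  unfolding max_chain_list_def is_max_chain_def is_chain_def basisB_def by auto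

lemma poset_automorphism_increasing_on:
  assumes f: "poset_automorphism X f"
    and \<theta>: "\<And>x y. (x, y) \<in> basisB X \<Longrightarrow> \<theta> (x, y) = (f x, f y)"
    and us: "max_chain_list X us"
  shows "increasing_on X \<theta> us"
proof -
  have "set us \<subseteq> X" "sorted_wrt (<) us"
    using us unfolding max_chain_list_def is_max_chain_def is_chain_def by auto
  then have "sorted_wrt (<) (map f us)"
    unfolding sorted_wrt_map
    by (elim sorted_wrt_mono_rel[rotated]) (use poset_automorphism_less_iff[OF f] in blast)
  moreover have "is_max_chain X (set (map f us))"
    using f us unfolding poset_automorphism_def max_chain_list_def
    by (simp only: set_map, intro is_max_chain_image) auto
  ultimately show ?thesis
    unfolding increasing_on_def max_chain_list_def
    using max_chain_list_basisB[OF us] \<theta> by (intro exI[of _ "map f us"]) auto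
qed

lemma poset_anti_automorphism_decreasing_on:
  assumes f: "poset_anti_automorphism X f"
    and \<theta>: "\<And>x y. (x, y) \<in> basisB X \<Longrightarrow> \<theta> (x, y) = (f y, f x)"
    and us: "max_chain_list X us"
  shows "decreasing_on X \<theta> us"
proof -
  have "set us \<subseteq> X" "sorted_wrt (<) us"
    using us unfolding max_chain_list_def is_max_chain_def is_chain_def by auto
  then have "sorted_wrt (<) (rev (map f us))"
    unfolding sorted_wrt_rev sorted_wrt_map
    by (elim sorted_wrt_mono_rel[rotated]) (use poset_anti_automorphism_less_iff[OF f] in blast)
  moreover have "is_max_chain X (set (rev (map f us)))"
    using f us unfolding poset_anti_automorphism_def max_chain_list_def
    by (simp only: set_map set_rev, intro is_max_chain_image) auto
  moreover have "rev (map f us) ! (length us - 1 - k) = f (us ! k)" if "k < length us" for k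
    using that by (simp add: rev_nth)
  ultimately show ?thesis
    unfolding decreasing_on_def max_chain_list_def
    using max_chain_list_basisB[OF us] \<theta> by (intro exI[of _ "rev (map f us)"]) auto
qed

text \<open>Both counts hand a step to P as the pair (lower end, upper end), whichever way it is
  traversed.\<close>
definition up_steps :: "'a::order list \<Rightarrow> ('a \<Rightarrow> 'a \<Rightarrow> bool) \<Rightarrow> nat" where
  "up_steps us P = card {i. Suc i < length us \<and> us ! i < us ! Suc i \<and> P (us ! i) (us ! Suc i)}"

definition down_steps :: "'a::order list \<Rightarrow> ('a \<Rightarrow> 'a \<Rightarrow> bool) \<Rightarrow> nat" where
  "down_steps us P = card {i. Suc i < length us \<and> us ! Suc i < us ! i \<and> P (us ! Suc i) (us ! i)}"

lemma s_t_counts_conv_steps: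
  "s_plus X \<theta> us z = up_steps us (\<lambda>a b. \<exists>w\<in>X. z < w \<and> \<theta> (z, w) = (a, b))"
  "s_minus X \<theta> us z = down_steps us (\<lambda>a b. \<exists>w\<in>X. z < w \<and> \<theta> (z, w) = (a, b))"
  "t_plus X \<theta> us z = up_steps us (\<lambda>a b. \<exists>w\<in>X. w < z \<and> \<theta> (w, z) = (a, b))"
  "t_minus X \<theta> us z = down_steps us (\<lambda>a b. \<exists>w\<in>X. w < z \<and> \<theta> (w, z) = (a, b))"
  unfolding s_plus_def s_minus_def t_plus_def t_minus_def up_steps_def down_steps_def by simp_all

lemma steps_cong:
  assumes "set us \<subseteq> X" "\<And>a b. a \<in> X \<Longrightarrow> b \<in> X \<Longrightarrow> a < b \<Longrightarrow> P a b \<longleftrightarrow> Q a b"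
  shows "up_steps us P = up_steps us Q" "down_steps us P = down_steps us Q"
proof -
  have "us ! i \<in> X" "us ! Suc i \<in> X" if "Suc i < length us" for i
    using assms(1) that by (auto dest: Suc_lessD)
  then show "up_steps us P = up_steps us Q" "down_steps us P = down_steps us Q"
    unfolding up_steps_def down_steps_def using assms(2) by (auto intro!: arg_cong[where f = card])
qed

lemma card_steps_split_up_down:
  assumes "is_walk X us"
  shows "card {i. Suc i < length us \<and> P (us ! i) (us ! Suc i)}
    = up_steps us P + down_steps us (\<lambda>a b. P b a)"
proof -
  let ?up = "{i. Suc i < length us \<and> us ! i < us ! Suc i \<and> P (us ! i) (us ! Suc i)}"
  let ?down = "{i. Suc i < length us \<and> us ! Suc i < us ! i \<and> P (us ! i) (us ! Suc i)}"
  have "{i. Suc i < length us \<and> P (us ! i) (us ! Suc i)} = ?up \<union> ?down"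
    using assms unfolding is_walk_def covers_def by blast
  moreover have "card (?up \<union> ?down) = card ?up + card ?down"
    by (rule card_Un_disjoint) (auto intro: finite_subset[of _ "{..<length us}"])
  ultimately show ?thesis
    unfolding up_steps_def down_steps_def by simp
qed

text \<open>In a closed walk u_0, ..., u_m = u_0 the sequences u_0, ..., u_(m-1) and u_1, ..., u_m
  are rearrangements of each other.\<close>
lemma card_steps_from_eq_card_steps_to:
  assumes "us \<noteq> []" "hd us = last us"
  shows "card {i. Suc i < length us \<and> us ! i = c} = card {i. Suc i < length us \<and> us ! Suc i = c}"
proof -
  have "count_list (butlast us) c = count_list (tl us) c"
  proof (cases us)
    case (Cons x ys)
    then show ?thesis
      using assms by (cases ys rule: rev_cases) (auto simp: count_list_append)
  qed (use assms in simp)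
  moreover have "{i. Suc i < length us \<and> us ! i = c} = {i. i < length (butlast us) \<and> butlast us ! i = c}"
    by (auto simp: nth_butlast)
  moreover have "{i. Suc i < length us \<and> us ! Suc i = c} = {i. i < length (tl us) \<and> tl us ! i = c}"
    by (auto simp: nth_tl)
  ultimately show ?thesis
    by (simp add: count_list_eq_length_filter length_filter_conv_card eq_commute)
qed

lemma closed_walk_steps_balance:
  assumes "closed_walk X us"
  shows "int (up_steps us (\<lambda>a b. a = c)) - int (down_steps us (\<lambda>a b. a = c))
    = int (up_steps us (\<lambda>a b. b = c)) - int (down_steps us (\<lambda>a b. b = c))"
  using card_steps_from_eq_card_steps_to[of us c]
    card_steps_split_up_down[of X us "\<lambda>a b. a = c"] card_steps_split_up_down[of X us "\<lambda>a b. b = c"]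
    assms unfolding closed_walk_def is_walk_def by simp

lemma poset_automorphism_edges_at:
  assumes f: "poset_automorphism X f"
    and \<theta>: "\<And>x y. (x, y) \<in> basisB X \<Longrightarrow> \<theta> (x, y) = (f x, f y)"
    and "z \<in> X" "a \<in> X" "b \<in> X" "a < b"
  shows "(\<exists>w\<in>X. z < w \<and> \<theta> (z, w) = (a, b)) \<longleftrightarrow> a = f z"
    and "(\<exists>w\<in>X. w < z \<and> \<theta> (w, z) = (a, b)) \<longleftrightarrow> b = f z"
proof -
  have "f ` X = X" and inj: "inj_on f X"
    using f unfolding poset_automorphism_def bij_betw_def by blast+
  then obtain x y where "x \<in> X" "y \<in> X" "a = f x" "b = f y"
    using assms by (metis imageE)
  then show "(\<exists>w\<in>X. z < w \<and> \<theta> (z, w) = (a, b)) \<longleftrightarrow> a = f z"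
    and "(\<exists>w\<in>X. w < z \<and> \<theta> (w, z) = (a, b)) \<longleftrightarrow> b = f z"
    using assms poset_automorphism_less_iff[OF f] inj_on_eq_iff[OF inj]
    unfolding basisB_def by auto
qed

lemma poset_anti_automorphism_edges_at:
  assumes f: "poset_anti_automorphism X f"
    and \<theta>: "\<And>x y. (x, y) \<in> basisB X \<Longrightarrow> \<theta> (x, y) = (f y, f x)"
    and "z \<in> X" "a \<in> X" "b \<in> X" "a < b"
  shows "(\<exists>w\<in>X. z < w \<and> \<theta> (z, w) = (a, b)) \<longleftrightarrow> b = f z"
    and "(\<exists>w\<in>X. w < z \<and> \<theta> (w, z) = (a, b)) \<longleftrightarrow> a = f z"
proof -
  have "f ` X = X" and inj: "inj_on f X"
    using f unfolding poset_anti_automorphism_def bij_betw_def by blast+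
  then obtain x y where "x \<in> X" "y \<in> X" "a = f x" "b = f y"
    using assms by (metis imageE)
  then show "(\<exists>w\<in>X. z < w \<and> \<theta> (z, w) = (a, b)) \<longleftrightarrow> b = f z"
    and "(\<exists>w\<in>X. w < z \<and> \<theta> (w, z) = (a, b)) \<longleftrightarrow> a = f z"
    using assms poset_anti_automorphism_less_iff[OF f] inj_on_eq_iff[OF inj]
    unfolding basisB_def by auto
qed

lemma poset_automorphism_admissible:
  assumes f: "poset_automorphism X f"
    and \<theta>: "\<And>x y. (x, y) \<in> basisB X \<Longrightarrow> \<theta> (x, y) = (f x, f y)"
  shows "admissible X \<theta>"
  unfolding admissible_def
proof (intro allI impI ballI)
  fix us z assume us: "closed_walk X us" and "z \<in> X"
  then have "set us \<subseteq> X"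
    unfolding closed_walk_def is_walk_def by blast
  note edges = poset_automorphism_edges_at[OF f \<theta> \<open>z \<in> X\<close>]
  let ?above = "\<lambda>a b. \<exists>w\<in>X. z < w \<and> \<theta> (z, w) = (a, b)"
  let ?below = "\<lambda>a b. \<exists>w\<in>X. w < z \<and> \<theta> (w, z) = (a, b)"
  have "up_steps us ?above = up_steps us (\<lambda>a b. a = f z)"
    "down_steps us ?above = down_steps us (\<lambda>a b. a = f z)"
    "up_steps us ?below = up_steps us (\<lambda>a b. b = f z)"
    "down_steps us ?below = down_steps us (\<lambda>a b. b = f z)"
    by (intro steps_cong[OF \<open>set us \<subseteq> X\<close>]; simp add: edges)+
  then show "int (s_plus X \<theta> us z) - int (s_minus X \<theta> us z) = int (t_plus X \<theta> us z) - int (t_minus X \<theta> us z)"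
    unfolding s_t_counts_conv_steps using closed_walk_steps_balance[OF us, of "f z"] by simp
qed

lemma poset_anti_automorphism_admissible:
  assumes f: "poset_anti_automorphism X f"
    and \<theta>: "\<And>x y. (x, y) \<in> basisB X \<Longrightarrow> \<theta> (x, y) = (f y, f x)"
  shows "admissible X \<theta>"
  unfolding admissible_def
proof (intro allI impI ballI)
  fix us z assume us: "closed_walk X us" and "z \<in> X"
  then have "set us \<subseteq> X"
    unfolding closed_walk_def is_walk_def by blast
  note edges = poset_anti_automorphism_edges_at[OF f \<theta> \<open>z \<in> X\<close>]
  let ?above = "\<lambda>a b. \<exists>w\<in>X. z < w \<and> \<theta> (z, w) = (a, b)"
  let ?below = "\<lambda>a b. \<exists>w\<in>X. w < z \<and> \<theta> (w, z) = (a, b)"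
  have "up_steps us ?above = up_steps us (\<lambda>a b. b = f z)"
    "down_steps us ?above = down_steps us (\<lambda>a b. b = f z)"
    "up_steps us ?below = up_steps us (\<lambda>a b. a = f z)"
    "down_steps us ?below = down_steps us (\<lambda>a b. a = f z)"
    by (intro steps_cong[OF \<open>set us \<subseteq> X\<close>]; simp add: edges)+
  then show "int (s_plus X \<theta> us z) - int (s_minus X \<theta> us z) = int (t_plus X \<theta> us z) - int (t_minus X \<theta> us z)"
    unfolding s_t_counts_conv_steps using closed_walk_steps_balance[OF us, of "f z"] by simp
qed

theorem proposition2p5:
  fixes X :: "'a::order set"
  assumes "finite X" and "poset_connected X"
  shows "P_set X \<subseteq> AM_set X"
proof
  fix \<theta> assume "\<theta> \<in> P_set X"
  then have bij: "bij_betw \<theta> (basisB X) (basisB X)"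
    and "(\<exists>f. poset_automorphism X f \<and> (\<forall>(x, y)\<in>basisB X. \<theta> (x, y) = (f x, f y))) \<or>
      (\<exists>f. poset_anti_automorphism X f \<and> (\<forall>(x, y)\<in>basisB X. \<theta> (x, y) = (f y, f x)))"
    unfolding P_set_def by blast+
  then consider
      (auto) f where "poset_automorphism X f" "\<And>x y. (x, y) \<in> basisB X \<Longrightarrow> \<theta> (x, y) = (f x, f y)"
    | (anti) f where "poset_anti_automorphism X f" "\<And>x y. (x, y) \<in> basisB X \<Longrightarrow> \<theta> (x, y) = (f y, f x)"
    by fast
  then show "\<theta> \<in> AM_set X"
  proof cases
    case auto
    then show ?thesis
      unfolding AM_set_def M_set_def
      using bij poset_automorphism_increasing_on poset_automorphism_admissible by blast
  next
    case anti
    then show ?thesis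
      unfolding AM_set_def M_set_def
      using bij poset_anti_automorphism_decreasing_on poset_anti_automorphism_admissible by blast
  qed
qed

end
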